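(* Let $A$ and $N$ be disjoint countable inverse semigroups, with $A$ unital and amenable and $N$ not amenable. Let $S=A\sqcup N$ with multiplication extending those of $A$ and $N$ and with $an=n=na$ for all $a\in A$, $n\in N$. Then $S$ is an inverse semigroup which is not amenable but is domain measurable.
   Context: Inverse semigroup: each $s$ has a unique $s^*$ with $ss^*s=s$, $s^*ss^*=s^*$. A semigroup $T$ is amenable if there is a finitely additive probability measure $\mu$ on $T$ with $\mu(t^{-1}B)=\mu(B)$ for all $t\in T$, $B\subseteq T$, where $t^{-1}B=\{r\in T:tr\in B\}$. An inverse semigroup $S$ is domain measurable if there is a finitely additive $\mu\colon\mathcal P(S)\to[0,\infty]$ with $\mu(S)=1$ and $\mu(s^*sB)=\mu(sB)$ for all $s\in S$, $B\subseteq S$ (here $sB=\{sb:b\in B\}$). *)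

theory Defs
  imports "HOL-Library.Countable" "HOL-Library.Extended_Nonnegative_Real"
begin

definition inverse_semigroup :: "('a \<Rightarrow> 'a \<Rightarrow> 'a) \<Rightarrow> bool" where
  "inverse_semigroup m \<longleftrightarrow>
     (\<forall>x y z. m (m x y) z = m x (m y z)) \<and>
     (\<forall>s. \<exists>!t. m (m s t) s = s \<and> m (m t s) t = t)"

definition isg_inv :: "('a \<Rightarrow> 'a \<Rightarrow> 'a) \<Rightarrow> 'a \<Rightarrow> 'a" where
  "isg_inv m s = (THE t. m (m s t) s = s \<and> m (m t s) t = t)"

definition unital :: "('a \<Rightarrow> 'a \<Rightarrow> 'a) \<Rightarrow> bool" where
  "unital m \<longleftrightarrow> (\<exists>e. \<forall>a. m e a = a \<and> m a e = a)"

definition amenable :: "('a \<Rightarrow> 'a \<Rightarrow> 'a) \<Rightarrow> bool" where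
  "amenable m \<longleftrightarrow> (\<exists>\<mu> :: 'a set \<Rightarrow> real.
     (\<forall>B. 0 \<le> \<mu> B) \<and> \<mu> UNIV = 1 \<and>
     (\<forall>B C. B \<inter> C = {} \<longrightarrow> \<mu> (B \<union> C) = \<mu> B + \<mu> C) \<and>
     (\<forall>t B. \<mu> {r. m t r \<in> B} = \<mu> B))"

definition domain_measurable :: "('a \<Rightarrow> 'a \<Rightarrow> 'a) \<Rightarrow> bool" where
  "domain_measurable m \<longleftrightarrow> (\<exists>\<mu> :: 'a set \<Rightarrow> ennreal.
     \<mu> UNIV = 1 \<and>
     (\<forall>B C. B \<inter> C = {} \<longrightarrow> \<mu> (B \<union> C) = \<mu> B + \<mu> C) \<and>
     (\<forall>s B. \<mu> (m (m (isg_inv m s) s) ` B) = \<mu> (m s ` B)))"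

fun sum_mult :: "('a \<Rightarrow> 'a \<Rightarrow> 'a) \<Rightarrow> ('n \<Rightarrow> 'n \<Rightarrow> 'n) \<Rightarrow> 'a + 'n \<Rightarrow> 'a + 'n \<Rightarrow> 'a + 'n" where
  "sum_mult mA mN (Inl a) (Inl b) = Inl (mA a b)"
| "sum_mult mA mN (Inr x) (Inr y) = Inr (mN x y)"
| "sum_mult mA mN (Inl a) (Inr y) = Inr y"
| "sum_mult mA mN (Inr x) (Inl b) = Inr x"

end

theory Submission
  imports Defs
begin

text \<open>Left multiplication by any element of N maps S = A \<squnion> N into N, so a left-invariant
  mean on S gives full mass to N, and restricting it to N would make N amenable. For domain
  measurability, push a left-invariant mean \<nu> of A into S: sets s B with s \<in> N get mass 0,
  and for a b a = a and e = b a the set e A has full \<nu>-mass while r \<mapsto> a r is injective on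
  it, so \<nu>(a C) = \<nu>(a e C) = \<nu>(a^-1(a e C) \<inter> e A) = \<nu>(e C).\<close>

definition fa_probability :: "('a set \<Rightarrow> real) \<Rightarrow> bool" where
  "fa_probability \<nu> \<longleftrightarrow>
     (\<forall>B. 0 \<le> \<nu> B) \<and> \<nu> UNIV = 1 \<and> (\<forall>B C. B \<inter> C = {} \<longrightarrow> \<nu> (B \<union> C) = \<nu> B + \<nu> C)"

definition invariant_mean :: "('a \<Rightarrow> 'a \<Rightarrow> 'a) \<Rightarrow> ('a set \<Rightarrow> real) \<Rightarrow> bool" where
  "invariant_mean m \<nu> \<longleftrightarrow> fa_probability \<nu> \<and> (\<forall>t B. \<nu> {r. m t r \<in> B} = \<nu> B)"

lemma amenable_iff_invariant_mean: "amenable m \<longleftrightarrow> (\<exists>\<nu>. invariant_mean m \<nu>)"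
  unfolding amenable_def invariant_mean_def fa_probability_def by blast

lemma fa_probability_Un:
  "fa_probability \<nu> \<Longrightarrow> B \<inter> C = {} \<Longrightarrow> \<nu> (B \<union> C) = \<nu> B + \<nu> C"
  unfolding fa_probability_def by blast

lemma fa_probability_restrict_full:
  assumes \<nu>: "fa_probability \<nu>" and full: "\<nu> Y = 1"
  shows "\<nu> X = \<nu> (X \<inter> Y)"
proof -
  have nonneg: "\<And>B. 0 \<le> \<nu> B" and univ: "\<nu> UNIV = 1"
    using \<nu> unfolding fa_probability_def by blast+
  have "\<nu> (Y \<union> - Y) = \<nu> Y + \<nu> (- Y)" by (rule fa_probability_Un[OF \<nu>]) blast
  with full univ have compl: "\<nu> (- Y) = 0" by simp
  have "(X - Y) \<union> (- Y - X) = - Y" by blast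
  then have "\<nu> (- Y) = \<nu> ((X - Y) \<union> (- Y - X))" by simp
  also have "\<dots> = \<nu> (X - Y) + \<nu> (- Y - X)" by (rule fa_probability_Un[OF \<nu>]) blast
  finally have "\<nu> (X - Y) = 0" using compl nonneg by (metis add_nonneg_eq_0_iff)
  moreover have "\<nu> ((X \<inter> Y) \<union> (X - Y)) = \<nu> (X \<inter> Y) + \<nu> (X - Y)"
    by (rule fa_probability_Un[OF \<nu>]) blast
  ultimately show ?thesis by (simp add: Int_Diff_Un)
qed

lemma invariant_mean_image_eq:
  assumes \<nu>: "invariant_mean m \<nu>" and full: "\<nu> R = 1"
    and inj: "inj_on (m a) R" and "D \<subseteq> R"
  shows "\<nu> (m a ` D) = \<nu> D"
proof -
  have "{r. m a r \<in> m a ` D} \<inter> R = D"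
    using inj \<open>D \<subseteq> R\<close> by (auto dest: inj_onD)
  moreover have "\<nu> (m a ` D) = \<nu> {r. m a r \<in> m a ` D}"
    using \<nu> unfolding invariant_mean_def by simp
  ultimately show ?thesis
    using fa_probability_restrict_full[of \<nu> R] full \<nu> unfolding invariant_mean_def by metis
qed

lemma invariant_mean_image_domain:
  assumes \<nu>: "invariant_mean m \<nu>"
    and assoc: "\<And>x y z. m (m x y) z = m x (m y z)" and aba: "m (m a b) a = a"
  shows "\<nu> (m a ` C) = \<nu> (m (m b a) ` C)"
proof -
  define e where "e = m b a"
  have ae: "m a (m e z) = m a z" for z
    by (metis aba assoc e_def)
  have ee: "m e (m e z) = m e z" for z
    by (metis ae assoc e_def)
  have "{r. m e r \<in> range (m e)} = UNIV" by auto
  then have full: "\<nu> (range (m e)) = 1"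
    using \<nu> unfolding invariant_mean_def fa_probability_def by metis
  have "inj_on (m a) (range (m e))"
  proof (rule inj_onI)
    fix r r' assume "r \<in> range (m e)" "r' \<in> range (m e)" and "m a r = m a r'"
    then have "m e r = m e r'" by (simp add: e_def assoc)
    with \<open>r \<in> range (m e)\<close> \<open>r' \<in> range (m e)\<close> show "r = r'" using ee by auto
  qed
  then have "\<nu> (m a ` m e ` C) = \<nu> (m e ` C)"
    by (rule invariant_mean_image_eq[OF \<nu> full]) auto
  moreover have "m a ` m e ` C = m a ` C" by (simp add: image_image ae)
  ultimately show ?thesis by (simp add: e_def)
qed

definition inverse_pair :: "('a \<Rightarrow> 'a \<Rightarrow> 'a) \<Rightarrow> 'a \<Rightarrow> 'a \<Rightarrow> bool" where
  "inverse_pair m s t \<longleftrightarrow> m (m s t) s = s \<and> m (m t s) t = t"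

lemma inverse_semigroup_iff:
  "inverse_semigroup m \<longleftrightarrow>
     (\<forall>x y z. m (m x y) z = m x (m y z)) \<and> (\<forall>s. \<exists>!t. inverse_pair m s t)"
  unfolding inverse_semigroup_def inverse_pair_def ..

lemma inverse_pair_isg_inv:
  assumes "inverse_semigroup m"
  shows "inverse_pair m s (isg_inv m s)"
proof -
  have "\<exists>!t. inverse_pair m s t"
    using assms unfolding inverse_semigroup_iff by blast
  then have "inverse_pair m s (THE t. inverse_pair m s t)"
    by (rule theI')
  then show ?thesis
    by (simp add: isg_inv_def inverse_pair_def)
qed

lemma inverse_pair_sum_mult_iff:
  "inverse_pair (sum_mult mA mN) s t \<longleftrightarrow>
     (\<exists>a b. s = Inl a \<and> t = Inl b \<and> inverse_pair mA a b) \<or>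
     (\<exists>x y. s = Inr x \<and> t = Inr y \<and> inverse_pair mN x y)"
  unfolding inverse_pair_def by (cases s; cases t) auto

lemma inverse_semigroup_sum_mult:
  assumes A: "inverse_semigroup mA" and N: "inverse_semigroup mN"
  shows "inverse_semigroup (sum_mult mA mN)"
  unfolding inverse_semigroup_iff
proof (intro conjI allI)
  fix x y z
  show "sum_mult mA mN (sum_mult mA mN x y) z = sum_mult mA mN x (sum_mult mA mN y z)"
    using A N unfolding inverse_semigroup_iff by (cases x; cases y; cases z) auto
next
  fix s
  show "\<exists>!t. inverse_pair (sum_mult mA mN) s t"
    using A N unfolding inverse_semigroup_iff inverse_pair_sum_mult_iff
    by (cases s; blast)
qed

lemma not_amenable_sum_mult:
  fixes mA :: "'a \<Rightarrow> 'a \<Rightarrow> 'a" and mN :: "'b \<Rightarrow> 'b \<Rightarrow> 'b"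
  assumes "\<not> amenable mN"
  shows "\<not> amenable (sum_mult mA mN)"
proof
  assume "amenable (sum_mult mA mN)"
  then obtain \<mu> where \<mu>: "invariant_mean (sum_mult mA mN) \<mu>"
    unfolding amenable_iff_invariant_mean by blast
  then have prob: "fa_probability \<mu>"
    and inv: "\<And>t B. \<mu> {r. sum_mult mA mN t r \<in> B} = \<mu> B"
    unfolding invariant_mean_def by blast+
  have "sum_mult mA mN (Inr n) r \<in> range Inr" for n r
    by (cases r) auto
  then have "{r. sum_mult mA mN (Inr n) r \<in> range Inr} = UNIV" for n
    by blast
  then have full: "\<mu> (range Inr) = 1"
    using inv prob unfolding fa_probability_def by metis
  have "invariant_mean mN (\<lambda>C. \<mu> (Inr ` C))"
    unfolding invariant_mean_def fa_probability_def
  proof (intro conjI allI impI)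
    fix B C :: "'b set" assume "B \<inter> C = {}"
    then show "\<mu> (Inr ` (B \<union> C)) = \<mu> (Inr ` B) + \<mu> (Inr ` C)"
      by (auto simp: image_Un intro: fa_probability_Un[OF prob])
  next
    fix t B
    have "{r. sum_mult mA mN (Inr t) r \<in> Inr ` B} \<inter> range Inr = Inr ` {r. mN t r \<in> B}"
      by auto
    then show "\<mu> (Inr ` {r. mN t r \<in> B}) = \<mu> (Inr ` B)"
      using inv fa_probability_restrict_full[OF prob full] by metis
  qed (use prob full in \<open>auto simp: fa_probability_def\<close>)
  with assms show False
    unfolding amenable_iff_invariant_mean by blast
qed

lemma vimage_Inl_sum_mult_Inl_image:
  "Inl -` (sum_mult mA mN (Inl a) ` B) = mA a ` (Inl -` B)"
proof (intro set_eqI iffI)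
  fix x assume "x \<in> Inl -` (sum_mult mA mN (Inl a) ` B)"
  then obtain w where "w \<in> B" "Inl x = sum_mult mA mN (Inl a) w" by auto
  then show "x \<in> mA a ` (Inl -` B)" by (cases w) auto
qed (auto intro: image_eqI[where x = "Inl _"])

lemma vimage_Inl_sum_mult_Inr_image:
  "Inl -` (sum_mult mA mN (Inr x) ` B) = {}"
  by (auto elim: sum_mult.elims[OF sym])

lemma domain_measurable_sum_mult:
  assumes A: "inverse_semigroup mA" and N: "inverse_semigroup mN" and "amenable mA"
  shows "domain_measurable (sum_mult mA mN)"
proof -
  obtain \<nu> where \<nu>: "invariant_mean mA \<nu>"
    using \<open>amenable mA\<close> unfolding amenable_iff_invariant_mean by blast
  then have prob: "fa_probability \<nu>" unfolding invariant_mean_def by blast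
  have assoc: "\<And>x y z. mA (mA x y) z = mA x (mA y z)"
    using A unfolding inverse_semigroup_iff by blast
  let ?m = "sum_mult mA mN"
  define \<mu> where "\<mu> B = ennreal (\<nu> (Inl -` B))" for B :: "('a + 'b) set"
  have domain: "\<mu> (?m (?m t s) ` B) = \<mu> (?m s ` B)" if "inverse_pair ?m s t" for s t B
    using that unfolding inverse_pair_sum_mult_iff
  proof (elim disjE exE conjE)
    fix a b assume "s = Inl a" "t = Inl b" "inverse_pair mA a b"
    moreover have "\<nu> (mA (mA b a) ` C) = \<nu> (mA a ` C)" for C
      using \<open>inverse_pair mA a b\<close> unfolding inverse_pair_def
      by (intro invariant_mean_image_domain[OF \<nu>, symmetric] assoc) blast
    ultimately show ?thesis
      by (simp add: \<mu>_def vimage_Inl_sum_mult_Inl_image)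
  next
    fix x y assume "s = Inr x" "t = Inr y"
    then show ?thesis by (simp add: \<mu>_def vimage_Inl_sum_mult_Inr_image)
  qed
  show ?thesis
    unfolding domain_measurable_def
  proof (intro exI[of _ \<mu>] conjI allI impI)
    show "\<mu> UNIV = 1" using prob by (simp add: \<mu>_def fa_probability_def)
  next
    fix B C :: "('a + 'b) set" assume "B \<inter> C = {}"
    then have "\<nu> (Inl -` (B \<union> C)) = \<nu> (Inl -` B) + \<nu> (Inl -` C)"
      by (auto intro: fa_probability_Un[OF prob])
    then show "\<mu> (B \<union> C) = \<mu> B + \<mu> C"
      using prob by (simp add: \<mu>_def fa_probability_def)
  next
    fix s B
    show "\<mu> (?m (?m (isg_inv ?m s) s) ` B) = \<mu> (?m s ` B)"
      by (rule domain[OF inverse_pair_isg_inv[OF inverse_semigroup_sum_mult[OF A N]]])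
  qed
qed

theorem mainTheorem19:
  fixes mA :: "'a::countable \<Rightarrow> 'a \<Rightarrow> 'a" and mN :: "'n::countable \<Rightarrow> 'n \<Rightarrow> 'n"
  assumes "inverse_semigroup mA" and "unital mA" and "amenable mA"
    and "inverse_semigroup mN" and "\<not> amenable mN"
  shows "inverse_semigroup (sum_mult mA mN) \<and> \<not> amenable (sum_mult mA mN)
         \<and> domain_measurable (sum_mult mA mN)"
  using inverse_semigroup_sum_mult[OF assms(1,4)] not_amenable_sum_mult[OF assms(5)]
    domain_measurable_sum_mult[OF assms(1,4,3)] by blast

end
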